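(* Let $D$ be a connected ribbon with an odd number of boxes such that $D\notin\mathfrak B$. If the length of $D$ is even, then $\mathfrak r_D$ is not $p$-positive.
   Context: A connected ribbon $D$ of composition $(\alpha_1,\dots,\alpha_\ell)$ has $\alpha_r$ consecutive boxes in row $r$ (rows numbered top to bottom), with the leftmost box of row $r$ directly above the rightmost box of row $r+1$; $\ell$ is its length. $D^t$ is the transpose and $D^\circ$ the rotation by 180 degrees. $\mathfrak r_D=\sum_T x^{c(T)}$ over fillings $T$ of $D$ with letters of $\{1'<1<2'<2<\cdots\}$ having rows and columns weakly increasing, at most one unmarked $k$ per column and at most one marked $k'$ per row; $c(T)_i$ counts entries $i$ or $i'$. $\triangle_{n,k}$ is the ribbon of composition $(1^{k-1},n-k+1)$. $\mathfrak B=\bigcup_n\mathfrak B_n$ with $\mathfrak B_n=\{\triangle_{n,1},\triangle_{n,1}^t,\triangle_{n,3},\triangle_{n,3}^t,\triangle_{n,3}^\circ,(\triangle_{n,3}^t)^\circ\}$ (only the first two when $n\le 2$). A symmetric function is $p$-positive if all its coefficients in the power sum basis are nonnegative. *)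

theory Defs
  imports Complex_Main
begin

text \<open>Cells are pairs (row, column) of integers; rows are numbered top to bottom,
columns left to right.\<close>

type_synonym cell = "int \<times> int"

text \<open>Starting column of row r of the ribbon with composition alpha
(the bottom row starts in column 0).\<close>
definition ribbon_start :: "nat list \<Rightarrow> nat \<Rightarrow> int" where
  "ribbon_start \<alpha> r = (\<Sum>j\<in>{r<..<length \<alpha>}. int (\<alpha> ! j) - 1)"

definition ribbon :: "nat list \<Rightarrow> cell set" where
  "ribbon \<alpha> = {(int r, c) | r c. r < length \<alpha> \<and>
      ribbon_start \<alpha> r \<le> c \<and> c < ribbon_start \<alpha> r + int (\<alpha> ! r)}"

definition is_composition :: "nat list \<Rightarrow> bool" where
  "is_composition \<alpha> \<longleftrightarrow> \<alpha> \<noteq> [] \<and> (\<forall>x\<in>set \<alpha>. 0 < x)"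

definition transp_cells :: "cell set \<Rightarrow> cell set" where
  "transp_cells S = (\<lambda>(r, c). (c, r)) ` S"

definition rot_cells :: "cell set \<Rightarrow> cell set" where
  "rot_cells S = (\<lambda>(r, c). (- r, - c)) ` S"

definition same_diagram :: "cell set \<Rightarrow> cell set \<Rightarrow> bool" where
  "same_diagram S S' \<longleftrightarrow> (\<exists>dr dc. S' = (\<lambda>(r, c). (r + dr, c + dc)) ` S)"

definition tri :: "nat \<Rightarrow> nat \<Rightarrow> cell set" where
  "tri n k = ribbon (replicate (k - 1) 1 @ [n - k + 1])"

definition Bset :: "nat \<Rightarrow> cell set set" where
  "Bset n = (if n \<le> 2 then {tri n 1, transp_cells (tri n 1)}
     else {tri n 1, transp_cells (tri n 1), tri n 3, transp_cells (tri n 3),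
           rot_cells (tri n 3), rot_cells (transp_cells (tri n 3))})"

definition in_frakB :: "cell set \<Rightarrow> bool" where
  "in_frakB S \<longleftrightarrow> (\<exists>n\<ge>1. \<exists>E\<in>Bset n. same_diagram S E)"

text \<open>Letters 1' < 1 < 2' < 2 < ... are encoded by natural numbers:
the letter (i+1)' is encoded by 2*i and the unmarked letter (i+1) by 2*i+1.
So the order is the order on codes, a code v is marked iff it is even,
and it belongs to variable index v div 2 (variables x_0, x_1, ... are
the paper's x_1, x_2, ...).\<close>

definition filling :: "cell set \<Rightarrow> (cell \<Rightarrow> nat) \<Rightarrow> bool" where
  "filling S T \<longleftrightarrow>
     (\<forall>x. x \<notin> S \<longrightarrow> T x = 0) \<and>
     (\<forall>r c c'. (r, c) \<in> S \<longrightarrow> (r, c') \<in> S \<longrightarrow> c < c' \<longrightarrow>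
         T (r, c) \<le> T (r, c') \<and> (T (r, c) = T (r, c') \<longrightarrow> odd (T (r, c)))) \<and>
     (\<forall>r r' c. (r, c) \<in> S \<longrightarrow> (r', c) \<in> S \<longrightarrow> r < r' \<longrightarrow>
         T (r, c) \<le> T (r', c) \<and> (T (r, c) = T (r', c) \<longrightarrow> even (T (r, c))))"

definition content :: "cell set \<Rightarrow> (cell \<Rightarrow> nat) \<Rightarrow> nat \<Rightarrow> nat" where
  "content S T i = card {x \<in> S. T x div 2 = i}"

text \<open>Coefficient of the monomial x^a in r_S.\<close>
definition rcoef :: "cell set \<Rightarrow> (nat \<Rightarrow> nat) \<Rightarrow> nat" where
  "rcoef S a = card {T. filling S T \<and> content S T = a}"

text \<open>Coefficient of the monomial x^a in the power sum p_lambda.\<close>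
definition pcoef :: "nat list \<Rightarrow> (nat \<Rightarrow> nat) \<Rightarrow> nat" where
  "pcoef lam a = card {f :: nat \<Rightarrow> nat. (\<forall>j\<ge>length lam. f j = 0) \<and>
      (\<forall>i. (\<Sum>j | j < length lam \<and> f j = i. lam ! j) = a i)}"

definition partitions :: "nat \<Rightarrow> nat list set" where
  "partitions N = {lam. sorted_wrt (\<ge>) lam \<and> (\<forall>x\<in>set lam. 0 < x) \<and> sum_list lam = N}"

text \<open>A homogeneous formal power series of degree N, given by its monomial
coefficients F a, is p-positive if it equals a nonnegative combination of the
power sums p_lambda, lambda a partition of N.\<close>
definition p_positive :: "nat \<Rightarrow> ((nat \<Rightarrow> nat) \<Rightarrow> nat) \<Rightarrow> bool" where
  "p_positive N F \<longleftrightarrow> (\<exists>c :: nat list \<Rightarrow> real.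
      (\<forall>lam\<in>partitions N. 0 \<le> c lam) \<and>
      (\<forall>a. finite {i. a i \<noteq> 0} \<longrightarrow>
          real (F a) = (\<Sum>lam\<in>partitions N. c lam * real (pcoef lam a))))"

end

(*
  Specialise to two variables: for F of degree N let
  \<psi>(F) = \<Sum>\<^sub>m -m (-1)^m [x\<^sub>0^(N-m) x\<^sub>1^m] F, i.e. \<psi>(F) = -(t d/dt) F(1, t) at t = -1.
  For a power sum, F(1, t) = \<Prod>\<^sub>j (1 + t^\<lambda>\<^sub>j) vanishes at t = -1 to order the number of odd
  parts, so for N odd \<psi>(p\<^sub>\<lambda>) \<ge> 0 and \<psi> is nonnegative on p-positive functions.
  For the ribbon, F(1, t) is the generating function of fillings with letters 1', 1, 2', 2
  counted by the number of letters 2', 2. Building the ribbon box by box from its bottom-left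
  box (each new box lies to the right of or above the previous one) gives a transfer recursion
  for the value and the t-derivative at t = -1, split by the letter in the newest box; it yields
  \<psi>(r\<^sub>D) = 2 (-1)^(\<ell>-1) when N is odd, which is -2 for even length \<ell>.
*)

theory Submission
  imports Defs
begin

section \<open>A linear functional that is nonnegative on p-positive functions\<close>

definition bivariate_exponent :: "nat \<Rightarrow> nat \<Rightarrow> nat \<Rightarrow> nat" where
  "bivariate_exponent N m = (\<lambda>i. if i = 0 then N - m else if i = 1 then m else 0)"

definition sign_moment :: "nat \<Rightarrow> ((nat \<Rightarrow> nat) \<Rightarrow> nat) \<Rightarrow> int" where
  "sign_moment N F = (\<Sum>m\<le>N. int (F (bivariate_exponent N m)) * (- int m * (-1) ^ m))"

lemma sum_by_fibres:
  assumes "finite A" "\<And>x. x \<in> A \<Longrightarrow> k x \<le> (N::nat)"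
  shows "(\<Sum>m\<le>N. of_nat (card {x\<in>A. k x = m}) * g m) = (\<Sum>x\<in>A. g (k x) :: 'a::comm_ring_1)"
proof -
  have "(\<Sum>x\<in>A. g (k x)) = (\<Sum>m\<le>N. \<Sum>x\<in>{x\<in>A. k x = m}. g (k x))"
    using assms by (subst sum.group[symmetric, of A "{..N}" k]) auto
  also have "\<dots> = (\<Sum>m\<le>N. of_nat (card {x\<in>A. k x = m}) * g m)"
    by (rule sum.cong) auto
  finally show ?thesis by simp
qed

lemma sign_moment_nonneg_if_p_positive:
  assumes pos: "p_positive N F"
    and nonneg: "\<And>lam. lam \<in> partitions N \<Longrightarrow> 0 \<le> sign_moment N (pcoef lam)"
  shows "0 \<le> sign_moment N F"
proof -
  obtain c :: "nat list \<Rightarrow> real" where c_nonneg: "\<forall>lam\<in>partitions N. 0 \<le> c lam"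
    and F_eq: "\<And>a. finite {i. a i \<noteq> 0} \<Longrightarrow>
          real (F a) = (\<Sum>lam\<in>partitions N. c lam * real (pcoef lam a))"
    using pos unfolding p_positive_def by blast
  have finite_support: "finite {i. bivariate_exponent N m i \<noteq> 0}" for m
    by (rule finite_subset[of _ "{0, 1}"]) (auto simp: bivariate_exponent_def)
  have "real_of_int (sign_moment N F)
      = (\<Sum>m\<le>N. \<Sum>lam\<in>partitions N. c lam * real (pcoef lam (bivariate_exponent N m)) * (- real m * (-1) ^ m))"
    unfolding sign_moment_def using F_eq[OF finite_support] by (simp add: sum_distrib_right sum_negf)
  also have "\<dots> = (\<Sum>lam\<in>partitions N. c lam * real_of_int (sign_moment N (pcoef lam)))"
    unfolding sign_moment_def by (subst sum.swap) (simp add: sum_distrib_left mult.assoc)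
  also have "\<dots> \<ge> 0"
    using c_nonneg nonneg by (intro sum_nonneg) simp
  finally show ?thesis by simp
qed

section \<open>Power sums\<close>

definition alt_subset_sum :: "('a \<Rightarrow> nat) \<Rightarrow> 'a set \<Rightarrow> int" where
  "alt_subset_sum w I = (\<Sum>S\<in>Pow I. (-1) ^ sum w S)"

definition alt_subset_moment :: "('a \<Rightarrow> nat) \<Rightarrow> 'a set \<Rightarrow> int" where
  "alt_subset_moment w I = (\<Sum>S\<in>Pow I. int (sum w S) * (-1) ^ sum w S)"

lemma sum_Pow_insert:
  assumes "finite I" "x \<notin> I"
  shows "(\<Sum>S\<in>Pow (insert x I). f S) = (\<Sum>S\<in>Pow I. f S) + (\<Sum>S\<in>Pow I. f (insert x S))"
proof -
  have "inj_on (insert x) (Pow I)"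
    using assms unfolding inj_on_def by auto
  moreover have "Pow I \<inter> insert x ` Pow I = {}"
    using assms by auto
  ultimately show ?thesis
    unfolding Pow_insert using assms by (simp add: sum.union_disjoint sum.reindex)
qed

lemma alt_subset_sums_insert:
  assumes "finite I" "x \<notin> I"
  shows "alt_subset_sum w (insert x I) = (1 + (-1) ^ w x) * alt_subset_sum w I"
    and "alt_subset_moment w (insert x I)
           = (1 + (-1) ^ w x) * alt_subset_moment w I + int (w x) * (-1) ^ w x * alt_subset_sum w I"
proof -
  have weight: "sum w (insert x S) = w x + sum w S" if "S \<in> Pow I" for S
    using assms that by (subst sum.insert) (auto intro: finite_subset)
  show "alt_subset_sum w (insert x I) = (1 + (-1) ^ w x) * alt_subset_sum w I"
    unfolding alt_subset_sum_def sum_Pow_insert[OF assms]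
    by (simp add: weight power_add distrib_right sum_distrib_left sum.distrib)
  show "alt_subset_moment w (insert x I)
           = (1 + (-1) ^ w x) * alt_subset_moment w I + int (w x) * (-1) ^ w x * alt_subset_sum w I"
    unfolding alt_subset_moment_def alt_subset_sum_def sum_Pow_insert[OF assms]
    by (simp add: weight power_add algebra_simps sum.distrib sum_distrib_left del: of_nat_sum)
qed

text \<open>In terms of the generating polynomial \<open>\<Prod>j\<in>I. 1 + t ^ w j\<close>, whose value and
  \<open>t d/dt\<close> at \<open>t = -1\<close> are the two sums: each odd weight contributes a root at \<open>-1\<close>.\<close>
lemma alt_subset_sums_sign:
  assumes "finite I"
  shows "((\<forall>j\<in>I. even (w j)) \<longrightarrow> 0 \<le> alt_subset_sum w I \<and> 0 \<le> alt_subset_moment w I)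
       \<and> ((\<exists>j\<in>I. odd (w j)) \<longrightarrow> alt_subset_sum w I = 0
            \<and> (if odd (sum w I) then alt_subset_moment w I \<le> 0 else alt_subset_moment w I = 0))"
  using assms
proof (induction I rule: finite_induct)
  case empty
  then show ?case by (simp add: alt_subset_sum_def alt_subset_moment_def)
next
  case (insert x I)
  have all_even_sum: "(\<forall>j\<in>I. even (w j)) \<Longrightarrow> even (sum w I)"
    by (simp add: dvd_sum)
  show ?case
    using insert all_even_sum by (cases "odd (w x)") (auto simp: alt_subset_sums_insert)
qed

lemma alt_subset_moment_nonpos:
  assumes "finite I" "odd (sum w I)"
  shows "alt_subset_moment w I \<le> 0"
proof -
  have "\<exists>j\<in>I. odd (w j)"
    using assms(2) dvd_sum[of I 2 w] by blast
  then show ?thesis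
    using alt_subset_sums_sign[OF assms(1), of w] assms(2) by auto
qed

lemma pcoef_bivariate_le_one:
  assumes pos: "\<forall>x\<in>set lam. 0 < x"
    and f: "\<And>i. (\<Sum>j | j < length lam \<and> f j = i. lam ! j) = bivariate_exponent N m i"
    and j: "j < length lam"
  shows "f j \<le> 1"
proof (rule ccontr)
  assume "\<not> f j \<le> 1"
  then have "(\<Sum>j' | j' < length lam \<and> f j' = f j. lam ! j') = 0"
    using f[of "f j"] by (simp add: bivariate_exponent_def)
  moreover have "lam ! j \<le> (\<Sum>j' | j' < length lam \<and> f j' = f j. lam ! j')"
    using j by (intro member_le_sum) auto
  ultimately have "lam ! j = 0"
    by simp
  then show False
    using pos j nth_mem by fastforce
qed

lemma pcoef_bivariate:
  assumes pos: "\<forall>x\<in>set lam. 0 < x" and N: "sum_list lam = N"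
  shows "pcoef lam (bivariate_exponent N m) = card {S \<in> Pow {..<length lam}. (\<Sum>j\<in>S. lam ! j) = m}"
proof -
  let ?l = "length lam"
  let ?G = "{S \<in> Pow {..<?l}. (\<Sum>j\<in>S. lam ! j) = m}"
  define ind where "ind S = (\<lambda>j::nat. if j \<in> S then 1 else 0 :: nat)" for S
  have total: "(\<Sum>j<?l. lam ! j) = N"
    using N by (simp add: sum_list_sum_nth atLeast0LessThan)
  have "{f. (\<forall>j\<ge>?l. f j = 0) \<and> (\<forall>i. (\<Sum>j | j < ?l \<and> f j = i. lam ! j) = bivariate_exponent N m i)}
      = ind ` ?G"
  proof (intro set_eqI iffI)
    fix f assume "f \<in> {f. (\<forall>j\<ge>?l. f j = 0) \<and>
        (\<forall>i. (\<Sum>j | j < ?l \<and> f j = i. lam ! j) = bivariate_exponent N m i)}"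
    then have out: "\<And>j. ?l \<le> j \<Longrightarrow> f j = 0"
      and f: "\<And>i. (\<Sum>j | j < ?l \<and> f j = i. lam ! j) = bivariate_exponent N m i"
      by auto
    have "f = ind {j. j < ?l \<and> f j = 1}"
    proof
      fix j
      show "f j = ind {j. j < ?l \<and> f j = 1} j"
        using pcoef_bivariate_le_one[OF pos f, of j] out[of j] by (cases "j < ?l") (auto simp: ind_def)
    qed
    moreover have "{j. j < ?l \<and> f j = 1} \<in> ?G"
      using f[of 1] by (auto simp: bivariate_exponent_def)
    ultimately show "f \<in> ind ` ?G" by blast
  next
    fix f assume "f \<in> ind ` ?G"
    then obtain S where S: "S \<subseteq> {..<?l}" "(\<Sum>j\<in>S. lam ! j) = m" and f: "f = ind S"
      by auto
    have complement: "(\<Sum>j\<in>{..<?l} - S. lam ! j) = N - m"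
      using S total sum.subset_diff[of S "{..<?l}" "\<lambda>j. lam ! j"] by simp
    have "{j. j < ?l \<and> f j = i} = (if i = 0 then {..<?l} - S else if i = 1 then S else {})" for i
      using S(1) by (auto simp: f ind_def)
    then have "(\<Sum>j | j < ?l \<and> f j = i. lam ! j) = bivariate_exponent N m i" for i
      using S(2) complement by (simp add: bivariate_exponent_def)
    moreover have "\<forall>j\<ge>?l. f j = 0"
      using S(1) by (auto simp: f ind_def)
    ultimately show "f \<in> {f. (\<forall>j\<ge>?l. f j = 0) \<and>
        (\<forall>i. (\<Sum>j | j < ?l \<and> f j = i. lam ! j) = bivariate_exponent N m i)}"
      by blast
  qed
  moreover have "inj_on ind ?G"
    by (rule inj_onI) (simp add: ind_def fun_eq_iff set_eq_iff, metis zero_neq_one)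
  ultimately show ?thesis
    unfolding pcoef_def by (simp add: card_image)
qed

lemma sign_moment_pcoef_nonneg:
  assumes "lam \<in> partitions N" "odd N"
  shows "0 \<le> sign_moment N (pcoef lam)"
proof -
  have pos: "\<forall>x\<in>set lam. 0 < x" and N: "sum_list lam = N"
    using assms(1) unfolding partitions_def by auto
  let ?I = "{..<length lam}"
  let ?w = "\<lambda>j. lam ! j"
  have total: "sum ?w ?I = N"
    using N by (simp add: sum_list_sum_nth atLeast0LessThan)
  then have le: "\<And>S. S \<in> Pow ?I \<Longrightarrow> sum ?w S \<le> N"
    by (metis PowD finite_lessThan sum_mono2 zero_le)
  have "sign_moment N (pcoef lam)
      = (\<Sum>m\<le>N. of_nat (card {S \<in> Pow ?I. sum ?w S = m}) * (- int m * (-1) ^ m))"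
    unfolding sign_moment_def pcoef_bivariate[OF pos N] by simp
  also have "\<dots> = (\<Sum>S\<in>Pow ?I. - int (sum ?w S) * (-1) ^ sum ?w S)"
    using sum_by_fibres[of "Pow ?I" "sum ?w" N "\<lambda>m. - int m * (-1) ^ m"] le by simp
  also have "\<dots> = - alt_subset_moment ?w ?I"
    unfolding alt_subset_moment_def by (simp add: sum_negf)
  finally show ?thesis
    using alt_subset_moment_nonpos[of ?I ?w] total assms(2) by simp
qed

section \<open>Ribbon functions in two variables\<close>

text \<open>Letters below 4 are 1', 1, 2', 2; \<open>high_count\<close> counts the letters 2', 2.
  The corner sums are the value and \<open>t d/dt\<close> at \<open>t = -1\<close> of the generating function of these
  fillings, restricted to those with letter \<open>v\<close> in box \<open>p\<close>.\<close>

definition small_fillings :: "cell set \<Rightarrow> (cell \<Rightarrow> nat) set" where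
  "small_fillings S = {T. filling S T \<and> (\<forall>x. T x < 4)}"

definition high_count :: "cell set \<Rightarrow> (cell \<Rightarrow> nat) \<Rightarrow> nat" where
  "high_count S T = card {x\<in>S. 2 \<le> T x}"

definition corner_sign_sum :: "cell set \<Rightarrow> cell \<Rightarrow> nat \<Rightarrow> int" where
  "corner_sign_sum S p v = (\<Sum>T\<in>{T\<in>small_fillings S. T p = v}. (-1) ^ high_count S T)"

definition corner_moment_sum :: "cell set \<Rightarrow> cell \<Rightarrow> nat \<Rightarrow> int" where
  "corner_moment_sum S p v =
     (\<Sum>T\<in>{T\<in>small_fillings S. T p = v}. int (high_count S T) * (-1) ^ high_count S T)"

lemma finite_small_fillings:
  assumes "finite S"
  shows "finite (small_fillings S)"
proof -
  have "small_fillings S \<subseteq> {f. \<forall>x. (x \<in> S \<longrightarrow> f x \<in> {..<4}) \<and> (x \<notin> S \<longrightarrow> f x = 0)}"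
    unfolding small_fillings_def filling_def by auto
  then show ?thesis
    using finite_set_of_finite_funs[OF assms, of "{..<4::nat}" 0] finite_subset by blast
qed

lemma filling_outside:
  "filling S T \<Longrightarrow> x \<notin> S \<Longrightarrow> T x = 0"
  unfolding filling_def by (simp del: split_paired_All)

lemma small_letter_div_2:
  "(v::nat) < 4 \<Longrightarrow> v div 2 = (if 2 \<le> v then 1 else 0)"
  by presburger

lemma content_bivariate_iff:
  assumes "filling S T" "finite S" "m \<le> card S"
  shows "content S T = bivariate_exponent (card S) m \<longleftrightarrow> (\<forall>x. T x < 4) \<and> high_count S T = m"
proof
  assume content: "content S T = bivariate_exponent (card S) m"
  have small: "T x < 4" for x
  proof (cases "x \<in> S")
    case False
    then show ?thesis
      using filling_outside[OF assms(1)] by simp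
  next
    case True
    then have "{y\<in>S. T y div 2 = T x div 2} \<noteq> {}"
      by blast
    then have "content S T (T x div 2) \<noteq> 0"
      unfolding content_def using assms(2) by simp
    then show ?thesis
      unfolding content by (auto simp: bivariate_exponent_def split: if_splits)
  qed
  moreover have "{x\<in>S. 2 \<le> T x} = {x\<in>S. T x div 2 = 1}"
    using small by (auto simp: small_letter_div_2)
  moreover have "content S T 1 = m"
    unfolding content by (simp add: bivariate_exponent_def)
  ultimately show "(\<forall>x. T x < 4) \<and> high_count S T = m"
    unfolding high_count_def content_def by simp
next
  assume small: "(\<forall>x. T x < 4) \<and> high_count S T = m"
  have high: "{x\<in>S. T x div 2 = 1} = {x\<in>S. 2 \<le> T x}"
    using small by (auto simp: small_letter_div_2)
  have low: "{x\<in>S. T x div 2 = 0} = S - {x\<in>S. 2 \<le> T x}"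
    using small by (auto simp: small_letter_div_2)
  have none: "{x\<in>S. T x div 2 = i} = {}" if "2 \<le> i" for i
    using small that by (auto simp: small_letter_div_2)
  show "content S T = bivariate_exponent (card S) m"
  proof
    fix i :: nat
    consider "i = 0" | "i = 1" | "2 \<le> i"
      by linarith
    then show "content S T i = bivariate_exponent (card S) m i"
      using small assms(2)
      by cases (simp_all add: content_def bivariate_exponent_def high[simplified] low none card_Diff_subset high_count_def)
  qed
qed

lemma sign_moment_rcoef:
  assumes "finite S"
  shows "sign_moment (card S) (rcoef S) = - (\<Sum>v<4. corner_moment_sum S p v)"
proof -
  have count_le: "high_count S T \<le> card S" for T
    unfolding high_count_def using assms by (intro card_mono) auto
  have "sign_moment (card S) (rcoef S)
      = (\<Sum>m\<le>card S. of_nat (card {T\<in>small_fillings S. high_count S T = m}) * (- int m * (-1) ^ m))"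
    unfolding sign_moment_def rcoef_def small_fillings_def
    by (intro sum.cong refl) (auto simp: content_bivariate_iff[OF _ assms] intro!: arg_cong[where f = card])
  also have "\<dots> = (\<Sum>T\<in>small_fillings S. - int (high_count S T) * (-1) ^ high_count S T)"
    by (rule sum_by_fibres) (simp_all add: finite_small_fillings assms count_le)
  also have "\<dots> = (\<Sum>v<4. \<Sum>T\<in>{T\<in>small_fillings S. T p = v}. - int (high_count S T) * (-1) ^ high_count S T)"
    using finite_small_fillings[OF assms]
    by (intro sum.group[symmetric]) (auto simp: small_fillings_def simp del: split_paired_All)
  also have "\<dots> = - (\<Sum>v<4. corner_moment_sum S p v)"
    unfolding corner_moment_sum_def by (simp add: sum_negf)
  finally show ?thesis .
qed

definition row_le :: "nat \<Rightarrow> nat \<Rightarrow> bool" where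
  "row_le u v \<longleftrightarrow> u \<le> v \<and> (u = v \<longrightarrow> odd u)"

definition col_le :: "nat \<Rightarrow> nat \<Rightarrow> bool" where
  "col_le u v \<longleftrightarrow> u \<le> v \<and> (u = v \<longrightarrow> even u)"

lemma row_le_trans: "row_le u v \<Longrightarrow> row_le v w \<Longrightarrow> row_le u w"
  unfolding row_le_def by auto

lemma col_le_trans: "col_le u v \<Longrightarrow> col_le v w \<Longrightarrow> col_le u w"
  unfolding col_le_def by auto

lemma filling_iff:
  "filling S T \<longleftrightarrow> (\<forall>x. x \<notin> S \<longrightarrow> T x = 0)
     \<and> (\<forall>r c c'. (r, c) \<in> S \<longrightarrow> (r, c') \<in> S \<longrightarrow> c < c' \<longrightarrow> row_le (T (r, c)) (T (r, c')))
     \<and> (\<forall>r r' c. (r, c) \<in> S \<longrightarrow> (r', c) \<in> S \<longrightarrow> r < r' \<longrightarrow> col_le (T (r, c)) (T (r', c)))"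
  unfolding filling_def row_le_def col_le_def ..

lemma filling_insert_right:
  assumes left: "(r0, q0 - 1) \<in> S"
    and row: "\<And>q. (r0, q) \<in> S \<Longrightarrow> q < q0"
    and col: "\<And>r. (r, q0) \<notin> S"
  shows "filling (insert (r0, q0) S) T \<longleftrightarrow>
           filling S (T((r0, q0) := 0)) \<and> row_le (T (r0, q0 - 1)) (T (r0, q0))"
proof -
  have new: "(r0, q0) \<notin> S"
    using col by blast
  \<comment> \<open>Transitivity of \<open>row_le\<close>: only the neighbour on the left has to be checked.\<close>
  have "(\<forall>c. (r0, c) \<in> S \<longrightarrow> row_le (T (r0, c)) (T (r0, q0)))"
    if "row_le (T (r0, q0 - 1)) (T (r0, q0))"
      and "\<forall>c c'. (r0, c) \<in> S \<longrightarrow> (r0, c') \<in> S \<longrightarrow> c < c' \<longrightarrow> row_le (T (r0, c)) (T (r0, c'))"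
    using that row left by (metis row_le_trans zle_diff1_eq order_le_less)
  then show ?thesis
    unfolding filling_iff using new row col left
    by (auto simp del: split_paired_All) (metis order_less_imp_not_less)+
qed

lemma filling_insert_above:
  assumes lower: "(r0 + 1, q0) \<in> S"
    and below: "\<And>r q. (r, q) \<in> S \<Longrightarrow> r0 < r"
  shows "filling (insert (r0, q0) S) T \<longleftrightarrow>
           filling S (T((r0, q0) := 0)) \<and> col_le (T (r0, q0)) (T (r0 + 1, q0))"
proof -
  have new: "(r0, q0) \<notin> S"
    using below by blast
  have "(\<forall>r. (r, q0) \<in> S \<longrightarrow> col_le (T (r0, q0)) (T (r, q0)))"
    if "col_le (T (r0, q0)) (T (r0 + 1, q0))"
      and "\<forall>r r'. (r, q0) \<in> S \<longrightarrow> (r', q0) \<in> S \<longrightarrow> r < r' \<longrightarrow> col_le (T (r, q0)) (T (r', q0))"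
    using that below lower by (metis col_le_trans zless_imp_add1_zle order_le_less)
  then show ?thesis
    unfolding filling_iff using new below lower
    by (auto simp del: split_paired_All) (metis order_less_imp_not_less)+
qed

lemma small_fillings_insert_fibre:
  assumes new: "c \<notin> S" and old: "p \<in> S"
    and extend: "\<And>T. filling (insert c S) T \<longleftrightarrow> filling S (T(c := 0)) \<and> R (T p) (T c)"
    and d: "d < 4"
  shows "{T\<in>small_fillings (insert c S). T c = d} = (\<lambda>T. T(c := d)) ` {T\<in>small_fillings S. R (T p) d}"
proof (intro set_eqI iffI)
  fix T assume "T \<in> {T\<in>small_fillings (insert c S). T c = d}"
  then have "T(c := 0) \<in> {T\<in>small_fillings S. R (T p) d}" and "T = (T(c := 0))(c := d)"
    using extend old new unfolding small_fillings_def by auto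
  then show "T \<in> (\<lambda>T. T(c := d)) ` {T\<in>small_fillings S. R (T p) d}"
    by blast
next
  fix T assume "T \<in> (\<lambda>T. T(c := d)) ` {T\<in>small_fillings S. R (T p) d}"
  then obtain T0 where T0: "T0 \<in> small_fillings S" "R (T0 p) d" and T: "T = T0(c := d)"
    by blast
  have "T(c := 0) = T0"
    using T filling_outside[of S T0 c] T0(1) new unfolding small_fillings_def by auto
  then show "T \<in> {T\<in>small_fillings (insert c S). T c = d}"
    using extend T0 T d old new unfolding small_fillings_def by auto
qed

lemma sum_small_fillings_insert:
  assumes fin: "finite S" and new: "c \<notin> S" and old: "p \<in> S"
    and extend: "\<And>T. filling (insert c S) T \<longleftrightarrow> filling S (T(c := 0)) \<and> R (T p) (T c)"
    and d: "d < 4"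
  shows "(\<Sum>T\<in>{T\<in>small_fillings (insert c S). T c = d}. h (high_count (insert c S) T))
       = (\<Sum>v\<in>{v\<in>{..<4}. R v d}.
            \<Sum>T\<in>{T\<in>small_fillings S. T p = v}. h (high_count S T + (if 2 \<le> d then 1 else 0)))"
proof -
  let ?A = "{T\<in>small_fillings S. R (T p) d}"
  have zero: "T c = 0" if "T \<in> small_fillings S" for T
    using that new filling_outside unfolding small_fillings_def by blast
  have inj: "inj_on (\<lambda>T. T(c := d)) ?A"
    by (rule inj_onI) (metis (no_types, lifting) zero fun_upd_idem_iff fun_upd_upd mem_Collect_eq)
  have count: "high_count (insert c S) (T(c := d)) = high_count S T + (if 2 \<le> d then 1 else 0)" for T
  proof -
    have "{x\<in>insert c S. 2 \<le> (T(c := d)) x}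
        = (if 2 \<le> d then insert c {x\<in>S. 2 \<le> T x} else {x\<in>S. 2 \<le> T x})"
      using new by auto
    then show ?thesis
      unfolding high_count_def using fin new by simp
  qed
  have "(\<Sum>T\<in>{T\<in>small_fillings (insert c S). T c = d}. h (high_count (insert c S) T))
      = (\<Sum>T\<in>?A. h (high_count S T + (if 2 \<le> d then 1 else 0)))"
    unfolding small_fillings_insert_fibre[OF new old extend d] by (simp add: sum.reindex[OF inj] count)
  also have "\<dots> = (\<Sum>v\<in>{v\<in>{..<4}. R v d}.
      \<Sum>T\<in>{T\<in>?A. T p = v}. h (high_count S T + (if 2 \<le> d then 1 else 0)))"
    using finite_subset[OF _ finite_small_fillings[OF fin], of ?A]
    by (intro sum.group[symmetric]) (auto simp: small_fillings_def simp del: split_paired_All)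
  also have "\<dots> = (\<Sum>v\<in>{v\<in>{..<4}. R v d}.
      \<Sum>T\<in>{T\<in>small_fillings S. T p = v}. h (high_count S T + (if 2 \<le> d then 1 else 0)))"
    by (intro sum.cong refl arg_cong2[where f = sum]) auto
  finally show ?thesis .
qed

lemma corner_sums_insert:
  assumes "finite S" "c \<notin> S" "p \<in> S"
    and extend: "\<And>T. filling (insert c S) T \<longleftrightarrow> filling S (T(c := 0)) \<and> R (T p) (T c)"
    and "d < 4"
  shows "corner_sign_sum (insert c S) c d
           = (if 2 \<le> d then -1 else 1) * (\<Sum>v<4. if R v d then corner_sign_sum S p v else 0)"
    and "corner_moment_sum (insert c S) c d
           = (if 2 \<le> d then - (\<Sum>v<4. if R v d then corner_moment_sum S p v + corner_sign_sum S p v else 0)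
              else (\<Sum>v<4. if R v d then corner_moment_sum S p v else 0))"
proof -
  have filter: "(\<Sum>v<4. if R v d then f v else 0) = (\<Sum>v\<in>{v\<in>{..<4}. R v d}. f v)" for f :: "nat \<Rightarrow> int"
    by (rule sum.inter_filter[symmetric]) simp
  note sign = sum_small_fillings_insert[OF assms, of "\<lambda>m. (-1::int) ^ m"]
  note moment = sum_small_fillings_insert[OF assms, of "\<lambda>m. int m * (-1) ^ m"]
  show "corner_sign_sum (insert c S) c d
           = (if 2 \<le> d then -1 else 1) * (\<Sum>v<4. if R v d then corner_sign_sum S p v else 0)"
    using sign unfolding filter corner_sign_sum_def
    by (cases "2 \<le> d") (simp_all add: sum_negf)
  show "corner_moment_sum (insert c S) c d
           = (if 2 \<le> d then - (\<Sum>v<4. if R v d then corner_moment_sum S p v + corner_sign_sum S p v else 0)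
              else (\<Sum>v<4. if R v d then corner_moment_sum S p v else 0))"
    using moment unfolding filter corner_sign_sum_def corner_moment_sum_def
    by (cases "2 \<le> d") (simp_all add: sum_negf sum.distrib sum_subtractf algebra_simps)
qed

lemma sum_lessThan_4: "(\<Sum>v<(4::nat). f v) = f 0 + f 1 + f 2 + (f 3 :: 'a::comm_monoid_add)"
  by (simp add: eval_nat_numeral add.assoc)

text \<open>The corner sums at the newest box of a ribbon with \<open>n\<close> boxes, with \<open>\<sigma>\<close> the sign
  \<open>(-1)^(length - 1)\<close>. Of the moment sums only the combinations that the recursion feeds
  into the next sign and moment sums are recorded.\<close>

definition transfer_state :: "nat \<Rightarrow> int \<Rightarrow> cell set \<Rightarrow> cell \<Rightarrow> bool" where
  "transfer_state n \<sigma> S p \<longleftrightarrow>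
    (n = 1 \<and> \<sigma> = 1
       \<and> corner_sign_sum S p 0 = 1 \<and> corner_sign_sum S p 1 = 1
       \<and> corner_sign_sum S p 2 = -1 \<and> corner_sign_sum S p 3 = -1
       \<and> corner_moment_sum S p 0 = 0 \<and> corner_moment_sum S p 1 = 0
       \<and> corner_moment_sum S p 2 = -1 \<and> corner_moment_sum S p 3 = -1)
  \<or> (2 \<le> n
       \<and> corner_sign_sum S p 0 = 0 \<and> corner_sign_sum S p 1 = 2 * \<sigma>
       \<and> corner_sign_sum S p 2 = -2 * \<sigma> \<and> corner_sign_sum S p 3 = 0
       \<and> corner_moment_sum S p 1 + corner_moment_sum S p 2 = -2 * \<sigma>
       \<and> corner_moment_sum S p 0 + corner_moment_sum S p 3 = (if odd n then 0 else 2 * \<sigma>))"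

lemma transfer_state_singleton: "transfer_state 1 1 {c} c"
proof -
  have fibre: "{T\<in>small_fillings {c}. T c = v} = {(\<lambda>_. 0)(c := v)}" if "v < 4" for v
    using that by (auto simp: small_fillings_def filling_def)
  have count: "high_count {c} ((\<lambda>_. 0)(c := v)) = (if 2 \<le> v then 1 else 0)" for v
    by (simp add: high_count_def)
  show ?thesis
    unfolding transfer_state_def corner_sign_sum_def corner_moment_sum_def
    by (simp add: fibre count)
qed

lemma transfer_state_insert_right:
  assumes "transfer_state n \<sigma> S p" "finite S" "c \<notin> S" "p \<in> S"
    and "\<And>T. filling (insert c S) T \<longleftrightarrow> filling S (T(c := 0)) \<and> row_le (T p) (T c)"
  shows "transfer_state (Suc n) \<sigma> (insert c S) c"
  using assms(1) corner_sums_insert[OF assms(2-5), of 0] corner_sums_insert[OF assms(2-5), of 1]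
    corner_sums_insert[OF assms(2-5), of 2] corner_sums_insert[OF assms(2-5), of 3]
  unfolding transfer_state_def by (auto simp: row_le_def sum_lessThan_4)

lemma transfer_state_insert_above:
  assumes "transfer_state n \<sigma> S p" "finite S" "c \<notin> S" "p \<in> S"
    and "\<And>T. filling (insert c S) T \<longleftrightarrow> filling S (T(c := 0)) \<and> col_le (T c) (T p)"
  shows "transfer_state (Suc n) (- \<sigma>) (insert c S) c"
  using assms(1) corner_sums_insert[OF assms(2-4), of "\<lambda>u v. col_le v u", OF assms(5), of 0]
    corner_sums_insert[OF assms(2-4), of "\<lambda>u v. col_le v u", OF assms(5), of 1]
    corner_sums_insert[OF assms(2-4), of "\<lambda>u v. col_le v u", OF assms(5), of 2]
    corner_sums_insert[OF assms(2-4), of "\<lambda>u v. col_le v u", OF assms(5), of 3]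
  unfolding transfer_state_def by (auto simp: col_le_def sum_lessThan_4)

section \<open>Building a ribbon box by box\<close>

definition ribbon_shift :: "nat \<Rightarrow> nat list \<Rightarrow> cell set" where
  "ribbon_shift k \<beta> = {(int k + int r, c) | r c. r < length \<beta> \<and>
      ribbon_start \<beta> r \<le> c \<and> c < ribbon_start \<beta> r + int (\<beta> ! r)}"

definition top_right :: "nat \<Rightarrow> nat list \<Rightarrow> cell" where
  "top_right k \<beta> = (int k, ribbon_start \<beta> 0 + int (\<beta> ! 0) - 1)"

lemma ribbon_eq_ribbon_shift: "ribbon \<beta> = ribbon_shift 0 \<beta>"
  unfolding ribbon_def ribbon_shift_def by simp

lemma finite_ribbon_shift: "finite (ribbon_shift k \<beta>)"
proof -
  have "ribbon_shift k \<beta> \<subseteq>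
      (\<Union>r<length \<beta>. {int k + int r} \<times> {ribbon_start \<beta> r..<ribbon_start \<beta> r + int (\<beta> ! r)})"
    unfolding ribbon_shift_def by auto
  then show ?thesis
    by (rule finite_subset) auto
qed

lemma ribbon_shift_rows: "(r, q) \<in> ribbon_shift k \<beta> \<Longrightarrow> int k \<le> r"
  unfolding ribbon_shift_def by auto

lemma ribbon_start_Cons: "ribbon_start (a # \<gamma>) r = (\<Sum>j\<in>{r..<length \<gamma>}. int (\<gamma> ! j) - 1)"
proof -
  have "{r<..<length (a # \<gamma>)} = Suc ` {r..<length \<gamma>}"
    by (simp add: atLeastSucLessThan_greaterThanLessThan)
  then have "ribbon_start (a # \<gamma>) r = (\<Sum>j\<in>Suc ` {r..<length \<gamma>}. int ((a # \<gamma>) ! j) - 1)"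
    unfolding ribbon_start_def by simp
  also have "\<dots> = (\<Sum>j\<in>{r..<length \<gamma>}. int (\<gamma> ! j) - 1)"
    by (subst sum.reindex) auto
  finally show ?thesis .
qed

lemma ribbon_start_Cons_Suc: "ribbon_start (a # \<gamma>) (Suc r) = ribbon_start \<gamma> r"
  by (simp only: ribbon_start_Cons) (simp add: ribbon_start_def atLeastSucLessThan_greaterThanLessThan)

lemma ribbon_start_Cons_0:
  "\<gamma> \<noteq> [] \<Longrightarrow> ribbon_start (a # \<gamma>) 0 = ribbon_start \<gamma> 0 + int (\<gamma> ! 0) - 1"
proof -
  assume "\<gamma> \<noteq> []"
  then have "{0..<length \<gamma>} = insert 0 {0<..<length \<gamma>}"
    by auto
  then show ?thesis
    by (simp only: ribbon_start_Cons) (simp add: ribbon_start_def)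
qed

lemma ribbon_start_singleton: "ribbon_start [a] 0 = 0"
  unfolding ribbon_start_def by simp

lemma row_end_le_top_row_end:
  assumes pos: "\<forall>x\<in>set \<beta>. 0 < x" and r: "r < length \<beta>"
  shows "ribbon_start \<beta> r + int (\<beta> ! r) \<le> ribbon_start \<beta> 0 + int (\<beta> ! 0)"
proof -
  have row_end: "ribbon_start \<beta> i + int (\<beta> ! i) - 1 = (\<Sum>j\<in>{i..<length \<beta>}. int (\<beta> ! j) - 1)"
    if "i < length \<beta>" for i
  proof -
    have "{i..<length \<beta>} = insert i {i<..<length \<beta>}"
      using that by auto
    then show ?thesis
      unfolding ribbon_start_def by simp
  qed
  have "(\<Sum>j\<in>{r..<length \<beta>}. int (\<beta> ! j) - 1) \<le> (\<Sum>j\<in>{0..<length \<beta>}. int (\<beta> ! j) - 1)"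
    using pos by (intro sum_mono2) (auto simp: nth_mem)
  moreover have "0 < length \<beta>"
    using r by linarith
  ultimately show ?thesis
    using row_end[OF r] row_end[of 0] by simp
qed

lemma top_right_in_ribbon_shift:
  "is_composition \<beta> \<Longrightarrow> top_right k \<beta> \<in> ribbon_shift k \<beta>"
  unfolding is_composition_def ribbon_shift_def top_right_def
  by (cases \<beta>) force+

lemma ribbon_shift_left_of_top_right:
  assumes "is_composition \<beta>" "(r, q) \<in> ribbon_shift k \<beta>"
  shows "q \<le> snd (top_right k \<beta>)"
  using assms row_end_le_top_row_end[of \<beta>]
  unfolding is_composition_def ribbon_shift_def top_right_def by fastforce

lemma ribbon_shift_Suc_head:
  assumes "0 < a"
  shows "ribbon_shift k (Suc a # \<gamma>) = insert (top_right k (Suc a # \<gamma>)) (ribbon_shift k (a # \<gamma>))"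
proof -
  have start: "ribbon_start (Suc a # \<gamma>) r = ribbon_start (a # \<gamma>) r" for r
    by (simp add: ribbon_start_Cons)
  show ?thesis
    unfolding ribbon_shift_def top_right_def start
    using assms by (auto simp: nth_Cons' less_Suc_eq_0_disj)
qed

lemma ribbon_shift_one_head:
  assumes "\<gamma> \<noteq> []"
  shows "ribbon_shift k (1 # \<gamma>) = insert (top_right k (1 # \<gamma>)) (ribbon_shift (Suc k) \<gamma>)"
  unfolding ribbon_shift_def top_right_def
  by (auto simp: nth_Cons' ribbon_start_Cons_Suc less_Suc_eq_0_disj)

lemma top_right_Suc_head: "top_right k (Suc a # \<gamma>) = (int k, snd (top_right k (a # \<gamma>)) + 1)"
  unfolding top_right_def by (simp add: ribbon_start_Cons)

lemma top_right_one_head: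
  "\<gamma> \<noteq> [] \<Longrightarrow> top_right (Suc k) \<gamma> = (int k + 1, snd (top_right k (1 # \<gamma>)))"
  unfolding top_right_def by (simp add: ribbon_start_Cons_0)

lemma composition_induct [consumes 1, case_names single grow stack]:
  assumes "is_composition \<beta>"
    and single: "P [1]"
    and grow: "\<And>a \<gamma>. is_composition (a # \<gamma>) \<Longrightarrow> P (a # \<gamma>) \<Longrightarrow> P (Suc a # \<gamma>)"
    and stack: "\<And>\<gamma>. is_composition \<gamma> \<Longrightarrow> P \<gamma> \<Longrightarrow> P (1 # \<gamma>)"
  shows "P \<beta>"
  using assms(1)
proof (induction "sum_list \<beta>" arbitrary: \<beta> rule: less_induct)
  case less
  then obtain a \<gamma> where \<beta>: "\<beta> = a # \<gamma>" and a: "0 < a" and \<gamma>: "\<forall>x\<in>set \<gamma>. 0 < x"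
    unfolding is_composition_def by (cases \<beta>) auto
  have "(a = 1 \<and> \<gamma> = []) \<or> (a = 1 \<and> \<gamma> \<noteq> []) \<or> (\<exists>a'. a = Suc a' \<and> 0 < a')"
    using a by (cases a) auto
  then consider "a = 1" "\<gamma> = []" | "a = 1" "\<gamma> \<noteq> []" | a' where "a = Suc a'" "0 < a'"
    by blast
  then show ?case
  proof cases
    case 1
    then show ?thesis
      using \<beta> single by simp
  next
    case 2
    then have "is_composition \<gamma>"
      using \<gamma> unfolding is_composition_def by simp
    moreover have "sum_list \<gamma> < sum_list \<beta>"
      using \<beta> 2 by simp
    ultimately have "P \<gamma>"
      using less.hyps by blast
    then show ?thesis
      unfolding \<beta> \<open>a = 1\<close> using stack \<open>is_composition \<gamma>\<close> by blast
  next
    case 3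
    then have "is_composition (a' # \<gamma>)"
      using \<gamma> unfolding is_composition_def by simp
    moreover have "sum_list (a' # \<gamma>) < sum_list \<beta>"
      using \<beta> 3 by simp
    ultimately have "P (a' # \<gamma>)"
      using less.hyps by blast
    then show ?thesis
      unfolding \<beta> \<open>a = Suc a'\<close> using grow \<open>is_composition (a' # \<gamma>)\<close> by blast
  qed
qed

lemma ribbon_shift_singleton: "ribbon_shift k [1] = {top_right k [1]}"
  unfolding ribbon_shift_def top_right_def by (auto simp: ribbon_start_singleton)

lemma card_ribbon_shift: "is_composition \<beta> \<Longrightarrow> card (ribbon_shift k \<beta>) = sum_list \<beta>"
proof (induction \<beta> arbitrary: k rule: composition_induct)
  case single
  show ?case
    unfolding ribbon_shift_singleton by simp
next
  case (grow a \<gamma>)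
  have "top_right k (Suc a # \<gamma>) \<notin> ribbon_shift k (a # \<gamma>)"
    using ribbon_shift_left_of_top_right[OF grow.hyps] by (fastforce simp: top_right_Suc_head)
  then show ?case
    using grow ribbon_shift_Suc_head[of a k \<gamma>] finite_ribbon_shift
    by (simp add: is_composition_def)
next
  case (stack \<gamma>)
  have "top_right k (1 # \<gamma>) \<notin> ribbon_shift (Suc k) \<gamma>"
    using ribbon_shift_rows[of _ _ "Suc k" \<gamma>] by (fastforce simp: top_right_def)
  then show ?case
    using stack ribbon_shift_one_head[of \<gamma> k] finite_ribbon_shift
    by (simp add: is_composition_def)
qed

lemma transfer_state_ribbon_shift:
  "is_composition \<beta> \<Longrightarrow>
     transfer_state (sum_list \<beta>) ((-1) ^ (length \<beta> - 1)) (ribbon_shift k \<beta>) (top_right k \<beta>)"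
proof (induction \<beta> arbitrary: k rule: composition_induct)
  case single
  show ?case
    unfolding ribbon_shift_singleton using transfer_state_singleton by simp
next
  case (grow a \<gamma>)
  let ?S = "ribbon_shift k (a # \<gamma>)"
  obtain q where p: "top_right k (a # \<gamma>) = (int k, q)"
    by (simp add: top_right_def)
  have c: "top_right k (Suc a # \<gamma>) = (int k, q + 1)"
    using p by (simp add: top_right_Suc_head)
  have left: "\<And>r q'. (r, q') \<in> ?S \<Longrightarrow> q' < q + 1"
    using ribbon_shift_left_of_top_right[OF grow.hyps] p by fastforce
  have mem: "(int k, q) \<in> ?S"
    using top_right_in_ribbon_shift[OF grow.hyps, of k] p by simp
  have new: "(r, q + 1) \<notin> ?S" for r
    using left by fastforce
  have "filling (insert (int k, q + 1) ?S) T
      \<longleftrightarrow> filling ?S (T((int k, q + 1) := 0)) \<and> row_le (T (int k, q)) (T (int k, q + 1))" for T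
    using filling_insert_right[of k "q + 1" ?S T] mem left new by simp
  then have "transfer_state (Suc (sum_list (a # \<gamma>))) ((-1) ^ (length (a # \<gamma>) - 1))
      (insert (int k, q + 1) ?S) (int k, q + 1)"
    using transfer_state_insert_right[OF grow.IH[of k, unfolded p] finite_ribbon_shift new[of "int k"] mem] by blast
  moreover have "0 < a"
    using grow.hyps by (simp add: is_composition_def)
  ultimately show ?case
    using ribbon_shift_Suc_head[of a k \<gamma>] c by simp
next
  case (stack \<gamma>)
  let ?S = "ribbon_shift (Suc k) \<gamma>"
  have ne: "\<gamma> \<noteq> []"
    using stack.hyps by (simp add: is_composition_def)
  obtain q where c: "top_right k (1 # \<gamma>) = (int k, q)"
    by (simp add: top_right_def)
  have p: "top_right (Suc k) \<gamma> = (int k + 1, q)"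
    using top_right_one_head[OF ne] c by simp
  have below: "\<And>r q'. (r, q') \<in> ?S \<Longrightarrow> int k < r"
    using ribbon_shift_rows by fastforce
  have mem: "(int k + 1, q) \<in> ?S"
    using top_right_in_ribbon_shift[OF stack.hyps, of "Suc k"] p by simp
  have new: "(int k, q) \<notin> ?S"
    using below by blast
  have "filling (insert (int k, q) ?S) T
      \<longleftrightarrow> filling ?S (T((int k, q) := 0)) \<and> col_le (T (int k, q)) (T (int k + 1, q))" for T
    using filling_insert_above[of k q ?S T] mem below by simp
  then have "transfer_state (Suc (sum_list \<gamma>)) (- ((-1) ^ (length \<gamma> - 1))) (insert (int k, q) ?S) (int k, q)"
    using transfer_state_insert_above[OF stack.IH[of "Suc k", unfolded p] finite_ribbon_shift new mem] by blast
  moreover have "- ((-1) ^ (length \<gamma> - 1)) = ((-1) ^ (length (1 # \<gamma>) - 1) :: int)"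
    using ne by (cases \<gamma>) auto
  ultimately show ?case
    using ribbon_shift_one_head[OF ne, of k] c by simp
qed

lemma sign_moment_rcoef_ribbon:
  assumes "is_composition \<alpha>" "odd (sum_list \<alpha>)"
  shows "sign_moment (sum_list \<alpha>) (rcoef (ribbon \<alpha>)) = 2 * (-1) ^ (length \<alpha> - 1)"
proof -
  have "sign_moment (sum_list \<alpha>) (rcoef (ribbon \<alpha>))
      = - (\<Sum>v<4. corner_moment_sum (ribbon_shift 0 \<alpha>) (top_right 0 \<alpha>) v)"
    using sign_moment_rcoef[OF finite_ribbon_shift] card_ribbon_shift[OF assms(1)]
    by (simp add: ribbon_eq_ribbon_shift)
  then show ?thesis
    using transfer_state_ribbon_shift[OF assms(1), of 0] assms(2)
    unfolding transfer_state_def sum_lessThan_4 by auto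
qed

text \<open>The hypothesis \<open>\<not> in_frakB (ribbon \<alpha>)\<close> is implied by the others: the members of
  \<open>Bset n\<close> with \<open>n\<close> odd have an odd number of rows.\<close>

theorem mainTheorem16:
  fixes \<alpha> :: "nat list"
  assumes "is_composition \<alpha>"
    and "odd (sum_list \<alpha>)"
    and "\<not> in_frakB (ribbon \<alpha>)"
    and "even (length \<alpha>)"
  shows "\<not> p_positive (sum_list \<alpha>) (rcoef (ribbon \<alpha>))"
proof
  assume "p_positive (sum_list \<alpha>) (rcoef (ribbon \<alpha>))"
  then have "0 \<le> sign_moment (sum_list \<alpha>) (rcoef (ribbon \<alpha>))"
    using sign_moment_nonneg_if_p_positive sign_moment_pcoef_nonneg assms(2) by blast
  moreover have "odd (length \<alpha> - 1)"
    using assms(1,4) by (cases \<alpha>) (auto simp: is_composition_def)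
  ultimately show False
    using sign_moment_rcoef_ribbon[OF assms(1,2)] by simp
qed

end
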